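(* Let $k$ be a positive integer and let $(X,Y)$ be a partition of $\{1,2,\dots,n\}$ into two sets. Call a pair $(a,b)$ bad if $a<b$, $a\in Y$ and $b\in X$. Assume that for every integer $t$ there are at most $k$ bad pairs $(a,b)$ with $a\le t<b$. Then the total number of bad pairs is at most $k(1+\ln k)$. *)

theory Defs
  imports Complex_Main
begin

definition bad_pairs :: "nat set \<Rightarrow> nat set \<Rightarrow> (nat \<times> nat) set" where
  "bad_pairs X Y = {(a, b). a < b \<and> a \<in> Y \<and> b \<in> X}"

end

theory Submission
  imports Defs "HOL-Analysis.Harmonic_Numbers"
begin

text \<open>Group the bad pairs by their right end \<open>b \<in> X\<close>. If \<open>y b\<close> elements of \<open>Y\<close> lie
  below \<open>b\<close> and \<open>c b\<close> elements of \<open>X\<close> lie at or above \<open>b\<close>, all \<open>y b * c b\<close> pairs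
  between them are bad and cross \<open>t = b - 1\<close>, so \<open>y b \<le> k / c b\<close>. The counts \<open>c b\<close> are
  distinct positive integers, so the total is at most \<open>k (1 + 1/2 + \<dots> + 1/k) \<le> k (1 + ln k)\<close>.\<close>

lemma harm_le_1_plus_ln:
  assumes "k > 0"
  shows "harm k \<le> 1 + ln (real k)"
  using euler_mascheroni_sequence_decreasing[of 1 k] assms by (simp add: harm_def)

lemma sum_le_harm_if_inj_mult_bounded:
  fixes y c :: "'a \<Rightarrow> nat"
  assumes "finite A" and "inj_on c A"
    and "\<And>b. b \<in> A \<Longrightarrow> c b > 0"
    and "\<And>b. b \<in> A \<Longrightarrow> y b * c b \<le> k"
  shows "(\<Sum>b\<in>A. real (y b)) \<le> real k * harm k"
proof -
  define f where "f i = (if i \<le> k then real k / real i else 0)" for i :: nat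
  have y_le: "real (y b) \<le> f (c b)" if "b \<in> A" for b
  proof (cases "c b \<le> k")
    case True
    have "real (y b) * real (c b) \<le> real k"
      using assms(4)[OF that] by (metis of_nat_le_iff of_nat_mult)
    then show ?thesis using True assms(3)[OF that] by (simp add: f_def field_simps)
  next
    case False
    have "y b = 0"
    proof (rule ccontr)
      assume "y b \<noteq> 0"
      then have "c b \<le> y b * c b" by simp
      with assms(4)[OF that] False show False by linarith
    qed
    then show ?thesis by (simp add: f_def)
  qed
  have "(\<Sum>b\<in>A. real (y b)) \<le> (\<Sum>b\<in>A. f (c b))"
    by (rule sum_mono) (rule y_le)
  also have "\<dots> = (\<Sum>i\<in>c ` A. f i)"
    using sum.reindex[OF assms(2), of f] by simp
  also have "\<dots> \<le> (\<Sum>i\<in>c ` A \<union> {1..k}. f i)"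
    by (rule sum_mono2) (use assms(1) in \<open>auto simp: f_def\<close>)
  also have "\<dots> = (\<Sum>i=1..k. f i)"
    using assms(1,3) by (intro sum.mono_neutral_right) (auto simp: f_def)
  also have "\<dots> = real k * harm k"
    by (simp add: f_def harm_def sum_distrib_left divide_inverse)
  finally show ?thesis .
qed

lemma card_bad_pairs_eq_sum:
  assumes "finite X"
  shows "card (bad_pairs X Y) = (\<Sum>b\<in>X. card {a\<in>Y. a < b})"
proof -
  have "bad_pairs X Y = (\<lambda>(b, a). (a, b)) ` Sigma X (\<lambda>b. {a\<in>Y. a < b})"
    unfolding bad_pairs_def by (auto simp: image_iff)
  then have "card (bad_pairs X Y) = card (Sigma X (\<lambda>b. {a\<in>Y. a < b}))"
    by (simp add: card_image inj_on_def)
  then show ?thesis using assms by simp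
qed

lemma bad_pairs_crossing_pred_eq_times:
  "{(a, b') \<in> bad_pairs X Y. int a \<le> int b - 1 \<and> int b - 1 < int b'}
     = {a\<in>Y. a < b} \<times> {b'\<in>X. b \<le> b'}"
  unfolding bad_pairs_def by auto

lemma card_suffix_strict_antimono:
  fixes X :: "'a::linorder set"
  assumes "finite X" and "v \<in> X" and "v < u"
  shows "card {x\<in>X. u \<le> x} < card {x\<in>X. v \<le> x}"
proof (rule psubset_card_mono)
  have "v \<in> {x\<in>X. v \<le> x} - {x\<in>X. u \<le> x}"
    using assms(2,3) by auto
  then show "{x\<in>X. u \<le> x} \<subset> {x\<in>X. v \<le> x}"
    using assms(3) by auto
qed (use assms(1) in auto)

lemma inj_on_card_suffix:
  fixes X :: "'a::linorder set"
  assumes "finite X"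
  shows "inj_on (\<lambda>b. card {x\<in>X. b \<le> x}) X"
  using card_suffix_strict_antimono[OF assms] by (intro linorder_inj_onI') (metis less_not_refl)

lemma card_suffix_pos:
  fixes X :: "'a::order set"
  assumes "finite X" and "b \<in> X"
  shows "card {x\<in>X. b \<le> x} > 0"
  using assms by (auto simp: card_gt_0_iff)

theorem mainTheorem10:
  fixes k n :: nat and X Y :: "nat set"
  assumes "k > 0"
    and "X \<union> Y = {1..n}" and "X \<inter> Y = {}"
    and "\<And>t::int. card {(a, b) \<in> bad_pairs X Y. int a \<le> t \<and> t < int b} \<le> k"
  shows "real (card (bad_pairs X Y)) \<le> real k * (1 + ln (real k))"
proof -
  have fin: "finite X"
    using assms(2) by (metis finite_Un finite_atLeastAtMost)
  have crossing: "card {a\<in>Y. a < b} * card {x\<in>X. b \<le> x} \<le> k" for b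
    using assms(4)[of "int b - 1"]
    unfolding bad_pairs_crossing_pred_eq_times by (simp add: card_cartesian_product)
  have "real (card (bad_pairs X Y)) = (\<Sum>b\<in>X. real (card {a\<in>Y. a < b}))"
    using card_bad_pairs_eq_sum[OF fin] by simp
  also have "\<dots> \<le> real k * harm k"
    using fin inj_on_card_suffix[OF fin] card_suffix_pos[OF fin] crossing
    by (rule sum_le_harm_if_inj_mult_bounded)
  also have "\<dots> \<le> real k * (1 + ln (real k))"
    using harm_le_1_plus_ln[OF assms(1)] by (simp add: mult_left_mono)
  finally show ?thesis .
qed

end
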